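(* Assume $N\ge1$ relays at (fixed) source–relay distances $d_1,\dots,d_N\in[0,R_{\mathcal D}]$, $\alpha=2$, and the far-destination approximation (every relay–destination distance equals $d$). For a relay at source distance $r$ define its outage probability (averaged over fading) $$O_r(P)=\mathcal{P}\big(x_0+\eta y(x-\epsilon)<\epsilon,\ x>\epsilon\big)+\mathcal{P}\big(x_0<\epsilon,\ x<\epsilon\big),\quad x=\frac{|h|^2}{1+r^2},\ y=\frac{|g|^2}{1+d^2}.$$ Then for all sufficiently large $P$, selecting the relay closest to the source minimizes the outage probability: $O_{\min_j d_j}(P)\le O_{d_i}(P)$ for every $i\in\{1,\dots,N\}$.
   Context: $x_0=|h_d|^2/(1+d^2)$, where $d>0$ is the source–destination distance; $h_d,h,g$ are independent $\mathcal{CN}(0,1)$ fading coefficients. $\tau=2^{2R}-1$ for target rate $R>0$, $\epsilon=\tau/P$ with transmit power $P$, energy harvesting efficiency $\eta\in(0,1]$. A relay decodes iff $x>\epsilon$ and forwards with harvested power $\eta(Px-\tau)$; outage when the combined destination SNR $P(x_0+\eta y(x-\epsilon))$ is below $\tau$ (if the relay cannot decode, outage iff $x_0<\epsilon$). *)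

theory Defs
  imports "HOL-Probability.Probability"
begin

text \<open>Squared magnitude of a CN(0,1) fading coefficient: Exp(1) distributed.\<close>
definition exp1 :: "real measure" where
  "exp1 = density lborel (exponential_density 1)"

text \<open>Joint law of (|h_d|^2, |h|^2, |g|^2): independent Exp(1).\<close>
definition fading :: "(real \<times> real \<times> real) measure" where
  "fading = exp1 \<Otimes>\<^sub>M (exp1 \<Otimes>\<^sub>M exp1)"

text \<open>Outage probability O_r(P) of a relay at source distance r, target rate R,
  harvesting efficiency eta, source-destination (= relay-destination) distance d.\<close>
definition outage :: "real \<Rightarrow> real \<Rightarrow> real \<Rightarrow> real \<Rightarrow> real \<Rightarrow> real" where
  "outage R eta d r P =
    (let tau = 2 powr (2 * R) - 1; eps = tau / P in
       measure fading {(hd, h, g). hd / (1 + d\<^sup>2) + eta * (g / (1 + d\<^sup>2)) * (h / (1 + r\<^sup>2) - eps) < eps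
                                   \<and> h / (1 + r\<^sup>2) > eps}
     + measure fading {(hd, h, g). hd / (1 + d\<^sup>2) < eps \<and> h / (1 + r\<^sup>2) < eps})"

end

theory Submission imports Defs begin

(* Writing x0 = |h_d|^2/(1+d^2), y = |g|^2/(1+d^2) and x = |h|^2/(1+r^2),
   a relay at source distance r is in outage exactly when the predicate outage_cond
   below holds.  The two events in the definition of outage are disjoint, so
   outage R eta d r P is the probability of the single event "outage_cond holds".
   For y >= 0 and x off the threshold eps, outage_cond is antitone in x: a stronger
   source-relay channel can only help.  Since x decreases as r grows, and the
   exceptional samples (h on the threshold, or negative h, g) form a null set of the
   exponential fading law, the outage probability is monotone in r for every
   transmit power P.  The closest relay has the smallest distance, so it minimizes
   the outage probability for all P, in particular for all sufficiently large P. *)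

lemma prob_space_exp1: "prob_space exp1"
  unfolding exp1_def by (simp add: prob_space_exponential_density)

lemma sets_exp1 [measurable_cong]: "sets exp1 = sets borel"
  unfolding exp1_def by simp

lemma prob_space_exp1_pair: "prob_space (exp1 \<Otimes>\<^sub>M exp1)"
  using prob_space_exp1
  by (intro prob_space_pair) (auto simp: pair_prob_space_def pair_sigma_finite_def prob_space_imp_sigma_finite)

lemma prob_space_fading: "prob_space fading"
  unfolding fading_def using prob_space_exp1 prob_space_exp1_pair
  by (intro prob_space_pair) (auto simp: pair_prob_space_def pair_sigma_finite_def prob_space_imp_sigma_finite)

lemma sets_fading [measurable_cong]: "sets fading = sets (borel \<Otimes>\<^sub>M (borel \<Otimes>\<^sub>M borel))"
  unfolding fading_def by (intro sets_pair_measure_cong sets_exp1)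

lemma space_fading [simp]: "space fading = UNIV"
  unfolding fading_def exp1_def by (simp add: space_pair_measure)

lemma exp1_null_sets: "finite S \<Longrightarrow> {..<0} \<union> S \<in> null_sets exp1"
  unfolding exp1_def
proof (subst null_sets_density_iff)
  assume "finite S"
  then have "AE x in lborel. x \<notin> S"
  proof (induction S rule: finite_induct)
    case (insert x F)
    show ?case
      using eventually_conj[OF AE_lborel_singleton[of x] insert.IH] by (rule eventually_mono) auto
  qed simp
  then show "{..<0} \<union> S \<in> sets lborel \<and> (AE x in lborel. x \<in> {..<0} \<union> S \<longrightarrow> ennreal (exponential_density 1 x) = 0)"
    using \<open>finite S\<close> by (auto simp: exponential_density_def finite_imp_closed elim!: eventually_mono)
qed simp

lemma fading_null_h: "Z \<in> null_sets exp1 \<Longrightarrow> UNIV \<times> (Z \<times> UNIV) \<in> null_sets fading"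
proof -
  interpret p: prob_space "exp1 \<Otimes>\<^sub>M exp1" by (rule prob_space_exp1_pair)
  interpret e: prob_space exp1 by (rule prob_space_exp1)
  assume "Z \<in> null_sets exp1"
  then have "Z \<times> UNIV \<in> null_sets (exp1 \<Otimes>\<^sub>M exp1)"
    by (intro e.times_in_null_sets1) (auto simp: sets_exp1)
  then show ?thesis unfolding fading_def
    by (intro p.times_in_null_sets2) (auto simp: sets_exp1)
qed

lemma fading_null_g: "Z \<in> null_sets exp1 \<Longrightarrow> UNIV \<times> (UNIV \<times> Z) \<in> null_sets fading"
proof -
  interpret p: prob_space "exp1 \<Otimes>\<^sub>M exp1" by (rule prob_space_exp1_pair)
  interpret e: prob_space exp1 by (rule prob_space_exp1)
  assume "Z \<in> null_sets exp1"
  then have "UNIV \<times> Z \<in> null_sets (exp1 \<Otimes>\<^sub>M exp1)"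
    by (intro e.times_in_null_sets2) (auto simp: sets_exp1)
  then show ?thesis unfolding fading_def
    by (intro p.times_in_null_sets2) (auto simp: sets_exp1)
qed

definition outage_cond :: "real \<Rightarrow> real \<Rightarrow> real \<Rightarrow> real \<Rightarrow> real \<Rightarrow> bool" where
  "outage_cond eta eps x0 y x \<longleftrightarrow>
     (x0 + eta * y * (x - eps) < eps \<and> x > eps) \<or> (x0 < eps \<and> x < eps)"

lemma outage_cond_antitone:
  assumes "0 \<le> eta" "0 \<le> y" "x2 \<le> x1" "x1 \<noteq> eps" "x2 \<noteq> eps"
    and "outage_cond eta eps x0 y x1"
  shows "outage_cond eta eps x0 y x2"
proof (cases "x2 > eps")
  case True
  with assms have "x1 > eps" and outage1: "x0 + eta * y * (x1 - eps) < eps"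
    by (auto simp: outage_cond_def)
  have "eta * y * (x2 - eps) \<le> eta * y * (x1 - eps)"
    using assms by (intro mult_left_mono) auto
  with True outage1 show ?thesis by (auto simp: outage_cond_def)
next
  case False
  then have "x2 < eps" using assms by auto
  moreover have "x0 < eps"
  proof (cases "x1 > eps")
    case True
    have "0 \<le> eta * y * (x1 - eps)" using assms True by auto
    with True assms(6) show ?thesis by (auto simp: outage_cond_def)
  qed (use assms in \<open>auto simp: outage_cond_def\<close>)
  ultimately show ?thesis by (auto simp: outage_cond_def)
qed

lemma outage_eq_measure_cond:
  "outage R eta d r P =
     measure fading {(hd, h, g). outage_cond eta ((2 powr (2 * R) - 1) / P)
                                   (hd / (1 + d\<^sup>2)) (g / (1 + d\<^sup>2)) (h / (1 + r\<^sup>2))}"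
    (is "_ = measure fading ?E")
proof -
  interpret prob_space fading by (rule prob_space_fading)
  define eps where "eps = (2 powr (2 * R) - 1) / P"
  define A where "A = {(hd::real, h::real, g::real). hd / (1 + d\<^sup>2) + eta * (g / (1 + d\<^sup>2)) *
                        (h / (1 + r\<^sup>2) - eps) < eps \<and> h / (1 + r\<^sup>2) > eps}"
  define B where "B = {(hd::real, h::real, g::real). hd / (1 + d\<^sup>2) < eps \<and> h / (1 + r\<^sup>2) < eps}"
  have "A = {p \<in> space fading. fst p / (1 + d\<^sup>2) + eta * (snd (snd p) / (1 + d\<^sup>2)) *
              (fst (snd p) / (1 + r\<^sup>2) - eps) < eps \<and> fst (snd p) / (1 + r\<^sup>2) > eps}"
    unfolding A_def by auto
  also have "\<dots> \<in> sets fading" by measurable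
  finally have A: "A \<in> sets fading" .
  have "B = {p \<in> space fading. fst p / (1 + d\<^sup>2) < eps \<and> fst (snd p) / (1 + r\<^sup>2) < eps}"
    unfolding B_def by auto
  also have "\<dots> \<in> sets fading" by measurable
  finally have B: "B \<in> sets fading" .
  have "A \<inter> B = {}" unfolding A_def B_def by auto
  then have "measure fading A + measure fading B = measure fading (A \<union> B)"
    using finite_measure_Union[OF A B] by simp
  moreover have "A \<union> B = ?E"
    unfolding A_def B_def eps_def outage_cond_def by auto
  ultimately show ?thesis
    unfolding outage_def A_def B_def eps_def Let_def by simp
qed

lemma outage_mono:
  assumes "0 \<le> eta" "0 \<le> r1" "r1 \<le> r2"
  shows "outage R eta d r1 P \<le> outage R eta d r2 P"
proof -
  interpret prob_space fading by (rule prob_space_fading)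
  define eps where "eps = (2 powr (2 * R) - 1) / P"
  define a where "a = 1 + d\<^sup>2"
  define b1 where "b1 = 1 + r1\<^sup>2"
  define b2 where "b2 = 1 + r2\<^sup>2"
  define E where "E b = {(hd, h, g). outage_cond eta eps (hd / a) (g / a) (h / b)}" for b
  have b: "1 \<le> b1" "b1 \<le> b2"
    unfolding b1_def b2_def using assms by (auto intro: power_mono)
  have "0 < a" unfolding a_def by (simp add: add_pos_nonneg)
  have outage_E: "outage R eta d r P = measure fading (E (1 + r\<^sup>2))" for r
    unfolding outage_eq_measure_cond E_def eps_def a_def ..
  have E_sets: "E b \<in> sets fading" for b
  proof -
    have "E b = {p \<in> space fading.
                   outage_cond eta eps (fst p / a) (snd (snd p) / a) (fst (snd p) / b)}"
      unfolding E_def by auto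
    also have "\<dots> \<in> sets fading" unfolding outage_cond_def by measurable
    finally show ?thesis .
  qed
  text \<open>Exceptional samples: |h|^2 on one of the two decoding thresholds, or a negative gain.\<close>
  define Z :: "(real \<times> real \<times> real) set"
    where "Z = UNIV \<times> (({..<0} \<union> {eps * b1, eps * b2}) \<times> UNIV) \<union> UNIV \<times> (UNIV \<times> {..<0})"
  have "{..<0} \<in> null_sets exp1" using exp1_null_sets[of "{}"] by simp
  then have "Z \<in> null_sets fading"
    unfolding Z_def by (intro null_sets.Un fading_null_h fading_null_g exp1_null_sets) auto
  then have "AE p in fading. p \<in> E b1 \<longrightarrow> p \<in> E b2"
  proof (rule AE_not_in[THEN eventually_mono])
    fix p assume "p \<notin> Z"
    obtain hd h g where p: "p = (hd, h, g)" by (cases p) auto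
    have h: "0 \<le> h" "h \<noteq> eps * b1" "h \<noteq> eps * b2" and "0 \<le> g"
      using \<open>p \<notin> Z\<close> unfolding Z_def p by auto
    have off1: "h / b1 \<noteq> eps" and off2: "h / b2 \<noteq> eps"
      using h b by (auto simp: field_simps)
    have weaker: "h / b2 \<le> h / b1" using h b by (intro divide_left_mono) auto
    have "0 \<le> g / a" using \<open>0 \<le> g\<close> \<open>0 < a\<close> by auto
    from outage_cond_antitone[OF assms(1) this weaker off1 off2]
    show "p \<in> E b1 \<longrightarrow> p \<in> E b2" unfolding p E_def by simp
  qed
  then have "measure fading (E b1) \<le> measure fading (E b2)"
    by (rule finite_measure_mono_AE) (rule E_sets)
  then show ?thesis unfolding outage_E b1_def b2_def .
qed

theorem proposition1:
  fixes N :: nat and dist :: "nat \<Rightarrow> real" and R_D R eta d :: real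
  assumes "N \<ge> 1"
    and "\<forall>i\<in>{1..N}. 0 \<le> dist i \<and> dist i \<le> R_D"
    and "R > 0" and "0 < eta" and "eta \<le> 1" and "d > 0"
  shows "\<forall>\<^sub>F P in at_top. \<forall>i\<in>{1..N}.
           outage R eta d (Min (dist ` {1..N})) P \<le> outage R eta d (dist i) P"
proof (rule always_eventually, intro allI ballI)
  fix P i assume i: "i \<in> {1..N}"
  have fin: "finite (dist ` {1..N})" "dist ` {1..N} \<noteq> {}" using assms(1) by auto
  then have "Min (dist ` {1..N}) \<in> dist ` {1..N}" by (rule Min_in)
  then have "0 \<le> Min (dist ` {1..N})" using assms(2) by auto
  moreover have "Min (dist ` {1..N}) \<le> dist i" using i fin by simp
  ultimately show "outage R eta d (Min (dist ` {1..N})) P \<le> outage R eta d (dist i) P"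
    using assms(4) by (intro outage_mono) auto
qed

end
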